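(* Let $p$ be a polynomial of degree $m$ with $p(t)=dt^m+O(t^{m-1})$, let $q$ be a polynomial of degree $d\ge1$ with $q(t)=t^d+O(t^{d-1})$ as $t\to\infty$, let $c\in\mathbb{C}$ and $g(z)=\int_0^zp(t)e^{q(t)}dt+c$. Let $\lambda=(d-1-m)/d$. Let $R>0$ be such that all critical values of $q$ lie in $D(0,R)$ and $2^{-d}|z|^d\le|q(z)|\le2^d|z|^d$ for $|z|\ge\frac12R^{1/d}$, let $G=\mathbb{C}\setminus(\overline{D(0,R)}\cup[0,\infty))$, let $S$ be any component of $q^{-1}(G)$ and let $\varphi$ be the branch of $q^{-1}$ on $G$ with $\varphi(G)=S$. Then there exists $c_S\in\mathbb{C}$ such that $$g(\varphi(w))=c_S+\frac{p(\varphi(w))}{q'(\varphi(w))}\Big(1+\frac{\lambda}{w}+O\big(|w|^{-1-1/d}\big)\Big)e^{w}$$ as $w\to\infty$ in $G$.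
   Context: $D(z_0,r)$ is the open disk. $q$ maps each component of $q^{-1}(G)$ conformally onto $G$, so $\varphi$ is well defined. *)

theory Defs
  imports "HOL-Complex_Analysis.Complex_Analysis" "HOL-Computational_Algebra.Polynomial"
begin

definition slitG :: "real \<Rightarrow> complex set" where
  "slitG R = - (cball 0 R \<union> {complex_of_real x | x. x \<ge> 0})"

end

(*
  Put F(z) = p(z)/q'(z) (1 + lam/q(z)) e^q(z) with lam = (d - 1 - m)/d. Then F' = e^q (p - D)
  for a rational function D, and lam is exactly the value for which the top coefficient of the
  numerator of D/q' cancels, so that D/q' = O(|q|^alpha) with alpha = (m - 2d)/d.

  Since q has no critical values in the slit domain G, it is a covering map over G; as G is
  simply connected, q maps each component S of its preimage bijectively onto G, so phi is
  holomorphic with phi' = 1/q'(phi). Hence K = g o phi - F o phi satisfies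
  |K'(w)| <= C e^Re(w) |w|^alpha. Integrating K' along horizontal rays running to the left,
  where e^w decays, K converges along every such ray to one constant c_S, and
  |K(w) - c_S| = O(e^Re(w) |w|^alpha). As |p/q'(phi w)| is of order |w|^(alpha + 1 + 1/d),
  this is the claimed error term.
*)

theory Submission
  imports Defs "HOL-Computational_Algebra.Fundamental_Theorem_Algebra" "HOL-Real_Asymp.Real_Asymp"
begin

section \<open>Growth of polynomials\<close>

lemma poly_norm_mult_le_if_top_coeff_zero:
  fixes P :: "'a::real_normed_field poly"
  assumes "degree P \<le> k" "coeff P k = 0"
  shows "\<exists>C\<ge>0. \<forall>z. 1 \<le> norm z \<longrightarrow> norm (poly P z) * norm z \<le> C * norm z ^ k"
proof -
  have eq: "poly P z = (\<Sum>i<k. coeff P i * z ^ i)" for z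
  proof -
    have "poly P z = (\<Sum>i\<le>k. coeff P i * z ^ i)"
      unfolding poly_altdef by (rule sum.mono_neutral_left) (auto simp: assms coeff_eq_0)
    also have "\<dots> = (\<Sum>i<k. coeff P i * z ^ i)"
      using assms(2) by (simp add: lessThan_Suc_atMost[symmetric])
    finally show ?thesis .
  qed
  have "norm (poly P z) * norm z \<le> (\<Sum>i<k. norm (coeff P i)) * norm z ^ k" if z: "1 \<le> norm z" for z
  proof -
    have "norm (poly P z) * norm z \<le> (\<Sum>i<k. norm (coeff P i) * norm z ^ i) * norm z"
      unfolding eq by (intro mult_right_mono order.trans[OF norm_sum]) (auto simp: norm_mult norm_power)
    also have "\<dots> = (\<Sum>i<k. norm (coeff P i) * norm z ^ Suc i)"
      by (simp add: sum_distrib_left sum_distrib_right mult_ac)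
    also have "\<dots> \<le> (\<Sum>i<k. norm (coeff P i) * norm z ^ k)"
      by (intro sum_mono mult_left_mono power_increasing) (use z in auto)
    finally show ?thesis by (simp add: sum_distrib_right)
  qed
  then show ?thesis by (intro exI[of _ "\<Sum>i<k. norm (coeff P i)"]) (auto intro: sum_nonneg)
qed

lemma poly_norm_le_power_if_degree_le:
  fixes P :: "'a::real_normed_field poly"
  assumes "degree P \<le> k"
  shows "\<exists>C>0. \<forall>z. 1 \<le> norm z \<longrightarrow> norm (poly P z) \<le> C * norm z ^ k"
proof -
  obtain C where C: "\<And>z. 1 \<le> norm z \<Longrightarrow> norm (poly P z) * norm z \<le> C * norm z ^ Suc k"
    using poly_norm_mult_le_if_top_coeff_zero[of P "Suc k"] assms by (auto simp: coeff_eq_0)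
  have "norm (poly P z) \<le> max C 1 * norm z ^ k" if "1 \<le> norm z" for z
  proof (rule mult_right_le_imp_le)
    have "norm (poly P z) * norm z \<le> C * norm z ^ Suc k" by (rule C[OF that])
    also have "\<dots> \<le> max C 1 * norm z ^ Suc k" by (intro mult_right_mono) auto
    finally show "norm (poly P z) * norm z \<le> max C 1 * norm z ^ k * norm z" by (simp add: mult_ac)
  qed (use that in auto)
  then show ?thesis by (intro exI[of _ "max C 1"]) auto
qed

lemma poly_norm_ge_power_degree:
  fixes P :: "'a::real_normed_field poly"
  assumes "P \<noteq> 0"
  shows "\<exists>c Z. 0 < c \<and> (\<forall>z. Z \<le> norm z \<longrightarrow> c * norm z ^ degree P \<le> norm (poly P z))"
proof -
  define k L where "k = degree P" and "L = lead_coeff P"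
  have L: "L \<noteq> 0" using assms by (simp add: L_def)
  define P0 where "P0 = P - monom L k"
  have "degree P0 \<le> k" unfolding P0_def k_def by (intro degree_diff_le) (auto simp: degree_monom_le)
  moreover have "coeff P0 k = 0" by (simp add: P0_def L_def k_def)
  ultimately obtain C where C: "\<And>z. 1 \<le> norm z \<Longrightarrow> norm (poly P0 z) * norm z \<le> C * norm z ^ k"
    using poly_norm_mult_le_if_top_coeff_zero by blast
  have bound: "norm L / 2 * norm z ^ k \<le> norm (poly P z)" if z: "max 1 (2 * C / norm L) \<le> norm z" for z
  proof -
    have z1: "1 \<le> norm z" and zC: "2 * C \<le> norm z * norm L" using z L by (auto simp: field_simps)
    have "norm L * norm z ^ k = norm (poly P z - poly P0 z)"
      by (simp add: P0_def poly_monom norm_mult norm_power)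
    also have "\<dots> \<le> norm (poly P z) + norm (poly P0 z)" by (rule norm_triangle_ineq4)
    finally have "norm L * norm z ^ k * norm z \<le> norm (poly P z) * norm z + C * norm z ^ k"
      using C[OF z1] mult_right_mono[of _ _ "norm z"] by (fastforce simp: algebra_simps)
    moreover have "2 * C * norm z ^ k \<le> norm z * norm L * norm z ^ k"
      using zC by (intro mult_right_mono) auto
    ultimately have "norm L / 2 * norm z ^ k * norm z \<le> norm (poly P z) * norm z"
      by (simp add: algebra_simps)
    then show ?thesis by (rule mult_right_le_imp_le) (use z1 in auto)
  qed
  show ?thesis
    using L bound unfolding k_def by (intro exI[of _ "norm L / 2"] exI[of _ "max 1 (2 * C / norm L)"]) auto
qed

lemma powr_le_powr_mult_if_comparable:
  fixes x y K e :: real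
  assumes "0 < x" "0 < y" "1 \<le> K" "x \<le> K * y" "y \<le> K * x"
  shows "x powr e \<le> K powr \<bar>e\<bar> * y powr e"
proof (cases "e \<ge> 0")
  case True
  have "x powr e \<le> (K * y) powr e" using assms True by (intro powr_mono2) auto
  also have "\<dots> = K powr \<bar>e\<bar> * y powr e" using True assms by (simp add: powr_mult)
  finally show ?thesis .
next
  case False
  have "y / K \<le> x" using assms by (simp add: field_simps)
  then have "x powr e \<le> (y / K) powr e" using assms False by (intro powr_mono2') auto
  also have "\<dots> = K powr \<bar>e\<bar> * y powr e" using False assms
    by (simp add: powr_divide powr_minus field_simps)
  finally show ?thesis .
qed

lemma powr_le_powr_abs:
  fixes x T a :: real
  assumes "1 \<le> x" "x \<le> T"
  shows "x powr a \<le> T powr \<bar>a\<bar>"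
proof (cases "a \<ge> 0")
  case True
  then show ?thesis using assms by (simp add: powr_mono2)
next
  case False
  then have "x powr a \<le> 1" using assms powr_mono2'[of a 1 x] by simp
  also have "1 \<le> T powr \<bar>a\<bar>" using assms by (intro ge_one_powr_ge_zero) auto
  finally show ?thesis .
qed

lemma power_div_power_eq_powr:
  fixes t :: real
  assumes "0 < t" "d \<noteq> 0"
  shows "t ^ j / t ^ k = (t ^ d) powr ((real j - real k) / real d)"
  using assms by (simp add: powr_realpow[symmetric] powr_powr powr_diff)

section \<open>Polynomial covering maps\<close>

lemma poly_surjective:
  fixes q :: "complex poly"
  assumes "0 < degree q"
  shows "\<exists>z. poly q z = w"
proof -
  have "degree (q + [:-w:]) = degree q" using assms by (intro degree_add_eq_left) auto
  then have "\<not> constant (poly (q + [:-w:]))" using assms by (simp add: constant_degree)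
  then obtain z where "poly (q + [:-w:]) z = 0" using fundamental_theorem_of_algebra by blast
  then show ?thesis by auto
qed

lemma bounded_poly_sublevel:
  fixes q :: "complex poly"
  assumes "0 < degree q"
  shows "bounded {z. norm (poly q z) \<le> B}"
proof -
  obtain a q' where q: "q = pCons a q'" by (cases q)
  then have "q' \<noteq> 0" using assms by auto
  then obtain r where r: "\<And>z. r \<le> norm z \<Longrightarrow> B + 1 \<le> norm (poly q z)"
    using poly_infinity[of q' "B + 1" a] q by auto
  have "{z. norm (poly q z) \<le> B} \<subseteq> ball 0 r"
  proof
    fix z assume "z \<in> {z. norm (poly q z) \<le> B}"
    then show "z \<in> ball 0 r" by (cases "r \<le> norm z") (use r[of z] in auto)
  qed
  then show ?thesis using bounded_ball bounded_subset by blast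
qed

lemma poly_near_value_imp_in_open:
  fixes q :: "complex poly"
  assumes "0 < degree q" "open U" "{z. poly q z = w} \<subseteq> U"
  shows "\<exists>e>0. \<forall>z. norm (poly q z - w) < e \<longrightarrow> z \<in> U"
proof -
  define K where "K = {z. norm (poly q z - w) \<le> 1} - U"
  have "{z. norm (poly q z - w) \<le> 1} \<subseteq> {z. norm (poly q z) \<le> norm w + 1}"
  proof
    fix z assume "z \<in> {z. norm (poly q z - w) \<le> 1}"
    then show "z \<in> {z. norm (poly q z) \<le> norm w + 1}" using norm_triangle_ineq2[of "poly q z" w] by simp
  qed
  then have "K \<subseteq> {z. norm (poly q z) \<le> norm w + 1}" unfolding K_def by blast
  then have "bounded K" by (rule bounded_subset[OF bounded_poly_sublevel[OF assms(1)]])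
  moreover have "closed K"
    unfolding K_def using assms(2) by (intro closed_Diff closed_Collect_le continuous_intros)
  ultimately have K: "compact K" by (simp add: compact_eq_bounded_closed)
  show ?thesis
  proof (cases "K = {}")
    case True
    then show ?thesis by (intro exI[of _ 1]) (auto simp: K_def)
  next
    case False
    have "continuous_on K (\<lambda>z. norm (poly q z - w))" by (intro continuous_intros)
    then obtain x where x: "x \<in> K" "\<And>y. y \<in> K \<Longrightarrow> norm (poly q x - w) \<le> norm (poly q y - w)"
      using continuous_attains_inf[OF K False] by blast
    have "0 < norm (poly q x - w)" using x(1) assms(3) by (auto simp: K_def)
    moreover have "z \<in> U" if z: "norm (poly q z - w) < norm (poly q x - w)" for z
    proof (rule ccontr)
      assume "z \<notin> U"
      moreover have "norm (poly q z - w) \<le> 1" using z x(1) unfolding K_def by auto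
      ultimately have "z \<in> K" by (simp add: K_def)
      then show False using x(2)[of z] z by simp
    qed
    ultimately show ?thesis by blast
  qed
qed

lemma finite_separating_radius:
  fixes Z :: "'a::metric_space set"
  assumes "finite Z" "\<And>z. z \<in> Z \<Longrightarrow> 0 < rf z"
  obtains r where "0 < r" "\<And>z. z \<in> Z \<Longrightarrow> r \<le> rf z"
    "\<And>z1 z2. z1 \<in> Z \<Longrightarrow> z2 \<in> Z \<Longrightarrow> z1 \<noteq> z2 \<Longrightarrow> ball z1 r \<inter> ball z2 r = {}"
proof -
  define A where "A = insert 1 (rf ` Z \<union> (\<lambda>(z1, z2). dist z1 z2 / 2) ` {(z1, z2). z1 \<in> Z \<and> z2 \<in> Z \<and> z1 \<noteq> z2})"
  have fin: "finite A"
    unfolding A_def using assms(1)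
    by (intro finite_insert[THEN iffD2] finite_UnI finite_imageI) (auto intro: finite_subset[of _ "Z \<times> Z"])
  have pos: "\<forall>x\<in>A. 0 < x" using assms(2) by (auto simp: A_def)
  have "A \<noteq> {}" by (simp add: A_def)
  show thesis
  proof (rule that[of "Min A"])
    show "0 < Min A" using Min_gr_iff[OF fin \<open>A \<noteq> {}\<close>] pos by blast
    show "Min A \<le> rf z" if "z \<in> Z" for z by (rule Min_le[OF fin]) (use that in \<open>simp add: A_def\<close>)
    fix z1 z2 assume "z1 \<in> Z" "z2 \<in> Z" "z1 \<noteq> z2"
    then have "dist z1 z2 / 2 \<in> A" by (auto simp: A_def image_iff)
    then have "Min A \<le> dist z1 z2 / 2" by (rule Min_le[OF fin])
    then show "ball z1 (Min A) \<inter> ball z2 (Min A) = {}" by (intro disjoint_ballI) simp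
  qed
qed

lemma holomorphic_on_poly: "poly q holomorphic_on S"
  unfolding holomorphic_on_def field_differentiable_def
  using poly_DERIV by (blast intro: has_field_derivative_at_within)

lemma poly_locally_injective:
  fixes q :: "complex poly"
  assumes "poly (pderiv q) z \<noteq> 0"
  shows "\<exists>r>0. inj_on (poly q) (ball z r)"
proof -
  have "deriv (poly q) z = poly (pderiv q) z" by (rule DERIV_imp_deriv[OF poly_DERIV])
  then obtain r where "0 < r" "inj_on (poly q) (ball z r)"
    using has_complex_derivative_locally_injective[of "poly q" UNIV z] holomorphic_on_poly[of q UNIV] assms
    by auto
  then show ?thesis by blast
qed

lemma finite_poly_fibre:
  fixes q :: "complex poly"
  assumes "0 < degree q"
  shows "finite {z. poly q z = w}"
proof -
  have "degree (q + [:-w:]) = degree q" using assms by (intro degree_add_eq_left) auto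
  then have "q + [:-w:] \<noteq> 0" using assms by auto
  then show ?thesis using poly_roots_finite[of "q + [:-w:]"] by simp
qed

lemma poly_evenly_covering_balls:
  fixes q :: "complex poly"
  assumes deg: "0 < degree q" and noncrit: "\<And>z. poly q z = w \<Longrightarrow> poly (pderiv q) z \<noteq> 0"
  obtains r e where "0 < r" "0 < e"
    "\<And>z. poly q z = w \<Longrightarrow> inj_on (poly q) (ball z r)"
    "\<And>z1 z2. poly q z1 = w \<Longrightarrow> poly q z2 = w \<Longrightarrow> z1 \<noteq> z2 \<Longrightarrow> ball z1 r \<inter> ball z2 r = {}"
    "\<And>z. norm (poly q z - w) < e \<Longrightarrow> \<exists>z0. poly q z0 = w \<and> z \<in> ball z0 r"
proof -
  define Z where "Z = {z. poly q z = w}"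
  have "\<forall>z\<in>Z. \<exists>r>0. inj_on (poly q) (ball z r)"
    using poly_locally_injective noncrit unfolding Z_def by blast
  from bchoice[OF this] obtain rf where rf: "\<forall>z\<in>Z. 0 < rf z \<and> inj_on (poly q) (ball z (rf z))"
    by blast
  have "finite Z" unfolding Z_def by (rule finite_poly_fibre[OF deg])
  then obtain r where r: "0 < r" "\<And>z. z \<in> Z \<Longrightarrow> r \<le> rf z"
    and disj: "\<And>z1 z2. z1 \<in> Z \<Longrightarrow> z2 \<in> Z \<Longrightarrow> z1 \<noteq> z2 \<Longrightarrow> ball z1 r \<inter> ball z2 r = {}"
    using finite_separating_radius[of Z rf] rf by blast
  have "open (\<Union>z0\<in>Z. ball z0 r)" by (intro open_UN ballI open_ball)
  moreover have "{z. poly q z = w} \<subseteq> (\<Union>z0\<in>Z. ball z0 r)" using r(1) by (auto simp: Z_def)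
  ultimately obtain e where e: "0 < e" "\<And>z. norm (poly q z - w) < e \<Longrightarrow> z \<in> (\<Union>z0\<in>Z. ball z0 r)"
    using poly_near_value_imp_in_open[OF deg] by blast
  show thesis
  proof (rule that[OF r(1) e(1)])
    show "inj_on (poly q) (ball z r)" if "poly q z = w" for z
    proof -
      have "z \<in> Z" using that by (simp add: Z_def)
      then show ?thesis using rf r(2) by (meson inj_on_subset subset_ball)
    qed
    show "ball z1 r \<inter> ball z2 r = {}" if "poly q z1 = w" "poly q z2 = w" "z1 \<noteq> z2" for z1 z2
      using disj that by (simp add: Z_def)
    show "\<exists>z0. poly q z0 = w \<and> z \<in> ball z0 r" if "norm (poly q z - w) < e" for z
      using e(2)[OF that] by (auto simp: Z_def)
  qed
qed

lemma poly_sheet: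
  fixes q :: "complex poly"
  assumes inj: "inj_on (poly q) (ball z r)" and T: "open T" "T \<subseteq> poly q ` ball z r" "T \<subseteq> G"
  shows "openin (top_of_set (poly q -` G)) (ball z r \<inter> poly q -` T)"
    and "\<exists>g. homeomorphism (ball z r \<inter> poly q -` T) T (poly q) g"
proof -
  define u where "u = ball z r \<inter> poly q -` T"
  have "open u" unfolding u_def using T by (intro open_Int open_vimage continuous_intros) auto
  moreover have "u \<subseteq> poly q -` G" using T by (auto simp: u_def)
  ultimately show "openin (top_of_set (poly q -` G)) (ball z r \<inter> poly q -` T)"
    unfolding u_def by (simp add: open_subset)
  have "continuous_on u (poly q)" by (intro continuous_intros)
  moreover have "inj_on (poly q) u" using inj by (rule inj_on_subset) (auto simp: u_def)
  ultimately obtain g where "homeomorphism u (poly q ` u) (poly q) g"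
    using invariance_of_domain_homeomorphism[of u "poly q"] \<open>open u\<close> by auto
  moreover have "poly q ` u = T" using T by (auto simp: u_def)
  ultimately show "\<exists>g. homeomorphism (ball z r \<inter> poly q -` T) T (poly q) g" unfolding u_def by auto
qed

lemma poly_covering_space:
  fixes q :: "complex poly"
  assumes G: "open G" and deg: "0 < degree q"
    and noncrit: "\<And>z. poly q z \<in> G \<Longrightarrow> poly (pderiv q) z \<noteq> 0"
  shows "covering_space (poly q -` G) (poly q) G"
proof (rule covering_spaceI)
  show "continuous_on (poly q -` G) (poly q)" by (intro continuous_intros)
  have "w \<in> poly q ` (poly q -` G)" if "w \<in> G" for w
    using poly_surjective[OF deg, of w] that by auto
  then show "poly q ` (poly q -` G) = G" by auto
next
  fix w assume w: "w \<in> G"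
  then have nc: "\<And>z. poly q z = w \<Longrightarrow> poly (pderiv q) z \<noteq> 0" using noncrit by blast
  obtain r e where r: "0 < r" and e: "0 < e"
    and inj: "\<And>z. poly q z = w \<Longrightarrow> inj_on (poly q) (ball z r)"
    and disj: "\<And>z1 z2. poly q z1 = w \<Longrightarrow> poly q z2 = w \<Longrightarrow> z1 \<noteq> z2 \<Longrightarrow> ball z1 r \<inter> ball z2 r = {}"
    and near: "\<And>z. norm (poly q z - w) < e \<Longrightarrow> \<exists>z0. poly q z0 = w \<and> z \<in> ball z0 r"
    using poly_evenly_covering_balls[where w=w, OF deg nc] by auto
  define Z where "Z = {z. poly q z = w}"
  define T where "T = ball w e \<inter> G \<inter> (\<Inter>z\<in>Z. poly q ` ball z r)"
  have "open (poly q ` ball z r)" if "z \<in> Z" for z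
    using inj that by (intro open_mapping_thm3 holomorphic_on_poly) (auto simp: Z_def)
  then have "open T"
    unfolding T_def using finite_poly_fibre[OF deg] G by (intro open_Int open_INT) (auto simp: Z_def)
  have "w \<in> T" using e w r by (auto simp: T_def Z_def)
  define v where "v = (\<lambda>z. ball z r \<inter> poly q -` T) ` Z"
  have "\<Union>v = poly q -` G \<inter> poly q -` T"
  proof
    show "\<Union>v \<subseteq> poly q -` G \<inter> poly q -` T" by (auto simp: v_def T_def)
    show "poly q -` G \<inter> poly q -` T \<subseteq> \<Union>v"
    proof
      fix y assume y: "y \<in> poly q -` G \<inter> poly q -` T"
      then have "norm (poly q y - w) < e" by (simp add: T_def dist_norm norm_minus_commute)
      then obtain z0 where "poly q z0 = w" "y \<in> ball z0 r" using near by blast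
      then show "y \<in> \<Union>v" using y by (auto simp: v_def Z_def)
    qed
  qed
  moreover have "openin (top_of_set (poly q -` G)) u \<and> (\<exists>g. homeomorphism u T (poly q) g)" if uv: "u \<in> v" for u
  proof -
    obtain z where z: "poly q z = w" and u: "u = ball z r \<inter> poly q -` T" using uv by (auto simp: v_def Z_def)
    have "T \<subseteq> poly q ` ball z r" "T \<subseteq> G" using z by (auto simp: T_def Z_def)
    then show ?thesis using poly_sheet[OF inj[OF z] \<open>open T\<close>] u by blast
  qed
  moreover have "pairwise disjnt v"
    using disj unfolding pairwise_def disjnt_def v_def Z_def by blast
  ultimately show "\<exists>T. w \<in> T \<and> openin (top_of_set G) T \<and>
          (\<exists>v. \<Union>v = poly q -` G \<inter> poly q -` T \<and> (\<forall>u\<in>v. openin (top_of_set (poly q -` G)) u) \<and>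
               pairwise disjnt v \<and> (\<forall>u\<in>v. \<exists>g. homeomorphism u T (poly q) g))"
    using \<open>w \<in> T\<close> \<open>open T\<close> by (intro exI[of _ T] conjI exI[of _ v]) (auto simp: T_def intro: open_subset)
qed

(* phi is not assumed continuous: it is compared with the continuous lift of the identity of G,
   and lifts of f restricted to the connected set S are unique. *)
lemma covering_space_section_inverse:
  fixes f :: "'a::real_normed_vector \<Rightarrow> 'b::real_normed_vector"
  assumes cov: "covering_space C f G" and "simply_connected G" "locally path_connected G"
    and S: "S \<in> components C" and sect: "\<And>w. w \<in> G \<Longrightarrow> f (\<phi> w) = w" and im: "\<phi> ` G \<subseteq> S"
    and z: "z \<in> S"
  shows "\<phi> (f z) = z"
proof -
  have SC: "S \<subseteq> C" using S by (rule in_components_subset)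
  have fC: "f ` C = G" using cov by (rule covering_space_imp_surjective)
  have contf: "continuous_on S f"
    using covering_space_imp_continuous[OF cov] SC by (rule continuous_on_subset)
  have w0: "f z \<in> G" using fC SC z by blast
  define a where "a = \<phi> (f z)"
  have a: "a \<in> S" "f a = f z" using im sect w0 by (auto simp: a_def)
  obtain \<psi> where \<psi>: "continuous_on G \<psi>" "\<psi> \<in> G \<rightarrow> C" "\<psi> (f z) = a" "\<And>y. y \<in> G \<Longrightarrow> f (\<psi> y) = y"
    using covering_space_lift_strong[OF cov _ w0 assms(2,3) continuous_on_id, of a] a SC by auto
  have "\<psi> (f x) = x" if "x \<in> S" for x
  proof (rule covering_space_lift_unique[OF cov, of "\<lambda>x. \<psi> (f x)" a "\<lambda>x. x" S f])
    show "continuous_on S (\<lambda>x. \<psi> (f x))"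
      using fC SC by (intro continuous_on_compose2[OF \<psi>(1) contf]) auto
  qed (use \<psi> a SC fC that in_components_connected[OF S] contf in \<open>auto simp: Pi_iff\<close>)
  then have "\<psi> (f z) = z" using z by blast
  then show ?thesis using \<psi>(3) by (simp add: a_def)
qed

section \<open>The slit domain\<close>

lemma slitG_iff: "w \<in> slitG R \<longleftrightarrow> R < norm w \<and> \<not> (Im w = 0 \<and> 0 \<le> Re w)"
proof -
  have "w \<in> {complex_of_real x |x. x \<ge> 0} \<longleftrightarrow> Im w = 0 \<and> Re w \<ge> 0"
    by (auto simp: complex_eq_iff intro!: exI[of _ "Re w"])
  then show ?thesis by (auto simp: slitG_def)
qed

lemma open_slitG: "open (slitG R)"
proof -
  have "{complex_of_real x |x. x \<ge> 0} = complex_of_real ` {0..}" by auto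
  then have "closed {complex_of_real x |x. x \<ge> 0}" using closed_slot_right by simp
  then show ?thesis unfolding slitG_def by (intro open_Compl closed_Un) auto
qed

lemma minus_exp_in_slitG:
  assumes "0 < R" "ln R < Re z" "\<bar>Im z\<bar> < pi"
  shows "- exp z \<in> slitG R"
proof -
  have "exp (ln R) < exp (Re z)" using assms(2) by simp
  then have "R < norm (- exp z)" using assms(1) by (simp add: norm_exp_eq_Re)
  moreover have "\<not> (Im (- exp z) = 0 \<and> 0 \<le> Re (- exp z))"
  proof
    assume "Im (- exp z) = 0 \<and> 0 \<le> Re (- exp z)"
    then have "sin (Im z) = 0" "cos (Im z) \<le> 0" by (auto simp: Im_exp Re_exp mult_le_0_iff)
    then show False using assms(3) sin_zero_pi_iff by fastforce
  qed
  ultimately show ?thesis by (simp add: slitG_iff)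
qed

lemma Ln_minus_in_strip:
  assumes "0 < R" "w \<in> slitG R"
  shows "ln R < Re (Ln (- w))" "- pi < Im (Ln (- w))" "Im (Ln (- w)) < pi"
proof -
  have nw: "R < norm w" and nr: "\<not> (Im w = 0 \<and> 0 \<le> Re w)" using assms(2) by (auto simp: slitG_iff)
  then have w0: "w \<noteq> 0" using assms(1) by auto
  show "ln R < Re (Ln (- w))" using nw assms(1) w0 by simp
  show "- pi < Im (Ln (- w))" using mpi_less_Im_Ln[of "-w"] w0 by simp
  have "Im (Ln (- w)) \<noteq> pi" using w0 nr by (auto simp: Im_Ln_eq_pi)
  then show "Im (Ln (- w)) < pi" using Im_Ln_le_pi[of "-w"] w0 by auto
qed

lemma simply_connected_slitG:
  assumes "0 < R"
  shows "simply_connected (slitG R)"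
proof -
  define Sg where "Sg = {z. ln R < Re z} \<inter> {z. Im z < pi} \<inter> {z. - pi < Im z}"
  have "convex Sg"
    unfolding Sg_def by (intro convex_Int convex_halfspace_Re_gt convex_halfspace_Im_lt convex_halfspace_Im_gt)
  moreover have "homeomorphism Sg (slitG R) (\<lambda>z. - exp z) (\<lambda>w. Ln (- w))"
  proof (rule homeomorphismI)
    show "continuous_on Sg (\<lambda>z. - exp z)" by (intro continuous_intros)
    show "continuous_on (slitG R) (\<lambda>w. Ln (- w))"
      by (intro continuous_intros) (auto simp: slitG_iff complex_nonpos_Reals_iff)
    show "(\<lambda>z. - exp z) ` Sg \<subseteq> slitG R"
      using minus_exp_in_slitG[OF assms] by (auto simp: Sg_def abs_less_iff)
    show "(\<lambda>w. Ln (- w)) ` slitG R \<subseteq> Sg"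
      using Ln_minus_in_strip[OF assms] by (auto simp: Sg_def)
    show "Ln (- (- exp z)) = z" if "z \<in> Sg" for z using that by (simp add: Sg_def)
    show "- exp (Ln (- w)) = w" if "w \<in> slitG R" for w
    proof -
      have "w \<noteq> 0" using that assms by (auto simp: slitG_iff)
      then show ?thesis by simp
    qed
  qed
  ultimately show ?thesis
    using convex_imp_simply_connected homeomorphic_simply_connected unfolding homeomorphic_def by blast
qed

section \<open>Primitives along leftward rays\<close>

lemma summable_exp_neg_mult_powr: "summable (\<lambda>n::nat. exp (- real n) * (real n + 2) powr b)"
proof (rule summable_comparison_test_bigo)
  show "summable (\<lambda>n. norm (real n powr (-2)))" using summable_real_powr_iff[of "-2"] by simp
  show "(\<lambda>n::nat. exp (- real n) * (real n + 2) powr b) \<in> O(\<lambda>n. real n powr (-2))" by real_asymp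
qed

lemma mem_closed_segment_minus_nat:
  assumes "s \<in> closed_segment (u - of_nat k) (u - of_nat (Suc k))"
  shows "\<exists>t. real k \<le> t \<and> t \<le> real k + 1 \<and> s = u - complex_of_real t"
proof -
  obtain \<theta> where \<theta>: "0 \<le> \<theta>" "\<theta> \<le> 1" "s = (1 - \<theta>) *\<^sub>R (u - of_nat k) + \<theta> *\<^sub>R (u - of_nat (Suc k))"
    using assms by (auto simp: in_segment)
  then have "s = u - complex_of_real (real k + \<theta>)" by (simp add: scaleR_conv_of_real algebra_simps)
  then show ?thesis using \<theta> by (intro exI[of _ "real k + \<theta>"]) auto
qed

lemma closed_segment_minus_nat_bounds:
  assumes "s \<in> closed_segment (u - of_nat n) (v - of_nat n)"
  shows "Re s \<le> max (Re u) (Re v) - real n" "norm s \<le> max (norm u) (norm v) + real n"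
proof -
  obtain \<theta> where \<theta>: "0 \<le> \<theta>" "\<theta> \<le> 1" and "s = (1 - \<theta>) *\<^sub>R (u - of_nat n) + \<theta> *\<^sub>R (v - of_nat n)"
    using assms by (auto simp: in_segment)
  then have s_eq: "s = ((1 - \<theta>) *\<^sub>R u + \<theta> *\<^sub>R v) - of_nat n" by (simp add: algebra_simps)
  have "Re s = (1 - \<theta>) * Re u + \<theta> * Re v - real n" by (simp add: s_eq)
  moreover have "(1 - \<theta>) * Re u + \<theta> * Re v \<le> (1 - \<theta>) * max (Re u) (Re v) + \<theta> * max (Re u) (Re v)"
    using \<theta> by (intro add_mono mult_left_mono) auto
  ultimately show "Re s \<le> max (Re u) (Re v) - real n" by (simp add: algebra_simps)
  have "norm ((1 - \<theta>) *\<^sub>R u + \<theta> *\<^sub>R v) \<le> (1 - \<theta>) * norm u + \<theta> * norm v"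
    using \<theta> norm_triangle_ineq[of "(1 - \<theta>) *\<^sub>R u" "\<theta> *\<^sub>R v"] by simp
  also have "\<dots> \<le> (1 - \<theta>) * max (norm u) (norm v) + \<theta> * max (norm u) (norm v)"
    using \<theta> by (intro add_mono mult_left_mono) auto
  moreover have "norm s \<le> norm ((1 - \<theta>) *\<^sub>R u + \<theta> *\<^sub>R v) + real n"
    unfolding s_eq using norm_triangle_ineq4[of "(1 - \<theta>) *\<^sub>R u + \<theta> *\<^sub>R v" "of_nat n"] by simp
  ultimately show "norm s \<le> max (norm u) (norm v) + real n" by (simp add: algebra_simps)
qed

locale slit_exp_bound =
  fixes K K' :: "complex \<Rightarrow> complex" and R h C a :: real
  assumes h_ge_1: "1 \<le> h" and R_less_h: "R < h" and C_nonneg: "0 \<le> C"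
    and K_deriv: "\<And>s. s \<in> slitG R \<Longrightarrow> (K has_field_derivative K' s) (at s)"
    and K'_bound: "\<And>s. s \<in> slitG R \<Longrightarrow> h \<le> norm s \<Longrightarrow> norm (K' s) \<le> C * exp (Re s) * norm s powr a"
begin

definition admissible :: "complex \<Rightarrow> bool" where
  "admissible u \<longleftrightarrow> 1 \<le> norm u \<and> (\<forall>t\<ge>0. u - of_real t \<in> slitG R \<and> h \<le> norm (u - of_real t)
      \<and> norm u \<le> (1 + t) * norm (u - of_real t))"

definition ray_sum :: real where "ray_sum = (\<Sum>n. exp (- real n) * (real n + 2) powr \<bar>a\<bar>)"

lemma ray_sum_nonneg: "0 \<le> ray_sum"
  unfolding ray_sum_def by (intro suminf_nonneg summable_exp_neg_mult_powr) auto

lemma K_diff_le_on_segment: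
  assumes "\<And>s. s \<in> closed_segment u v \<Longrightarrow> s \<in> slitG R \<and> h \<le> norm s \<and> C * exp (Re s) * norm s powr a \<le> B"
  shows "norm (K u - K v) \<le> B * norm (u - v)"
proof (rule field_differentiable_bound[OF convex_closed_segment])
  fix s assume s: "s \<in> closed_segment u v"
  show "(K has_field_derivative K' s) (at s within closed_segment u v)"
    using K_deriv assms[OF s] by (blast intro: has_field_derivative_at_within)
  show "norm (K' s) \<le> B" using K'_bound[of s] assms[OF s] by auto
qed auto

lemma K_unit_step_bound:
  assumes u: "admissible u"
  shows "norm (K (u - of_nat k) - K (u - of_nat (Suc k)))
     \<le> C * exp (Re u) * norm u powr a * (exp (- real k) * (real k + 2) powr \<bar>a\<bar>)"
proof -
  have "norm (K (u - of_nat k) - K (u - of_nat (Suc k)))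
     \<le> (C * exp (Re u) * norm u powr a * (exp (- real k) * (real k + 2) powr \<bar>a\<bar>))
       * norm ((u - of_nat k) - (u - of_nat (Suc k)))"
  proof (rule K_diff_le_on_segment)
    fix s assume "s \<in> closed_segment (u - of_nat k) (u - of_nat (Suc k))"
    then obtain t where t: "real k \<le> t" "t \<le> real k + 1" "s = u - complex_of_real t"
      using mem_closed_segment_minus_nat by blast
    have u1: "1 \<le> norm u" and sG: "s \<in> slitG R" and sh: "h \<le> norm s" and us: "norm u \<le> (1 + t) * norm s"
      using u t by (auto simp: admissible_def)
    have "norm s \<le> norm u + t" using t norm_triangle_ineq4[of u "complex_of_real t"] by simp
    also have "\<dots> \<le> (1 + t) * norm u" using u1 t by (simp add: algebra_simps mult_le_cancel_left1)
    finally have "norm s powr a \<le> (1 + t) powr \<bar>a\<bar> * norm u powr a"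
      using sh h_ge_1 u1 t us by (intro powr_le_powr_mult_if_comparable) auto
    also have "\<dots> \<le> (real k + 2) powr \<bar>a\<bar> * norm u powr a"
      using t by (intro mult_right_mono powr_mono2) auto
    finally have "norm s powr a \<le> (real k + 2) powr \<bar>a\<bar> * norm u powr a" .
    moreover have "exp (Re s) \<le> exp (Re u) * exp (- real k)"
      using t by (simp add: exp_add[symmetric])
    ultimately have "C * exp (Re s) * norm s powr a
        \<le> C * (exp (Re u) * exp (- real k)) * ((real k + 2) powr \<bar>a\<bar> * norm u powr a)"
      using C_nonneg by (intro mult_mono) auto
    then show "s \<in> slitG R \<and> h \<le> norm s \<and> C * exp (Re s) * norm s powr a
        \<le> C * exp (Re u) * norm u powr a * (exp (- real k) * (real k + 2) powr \<bar>a\<bar>)"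
      using sG sh by (simp add: mult_ac)
  qed
  then show ?thesis by simp
qed

lemma K_ray_limit:
  assumes u: "admissible u"
  shows "\<exists>L. (\<lambda>n. K (u - of_nat n)) \<longlonglongrightarrow> L \<and> norm (K u - L) \<le> C * exp (Re u) * norm u powr a * ray_sum"
proof -
  define D where "D = C * exp (Re u) * norm u powr a"
  define b where "b = (\<lambda>n::nat. exp (- real n) * (real n + 2) powr \<bar>a\<bar>)"
  define f where "f = (\<lambda>k::nat. K (u - of_nat k) - K (u - of_nat (Suc k)))"
  have fb: "norm (f k) \<le> D * b k" for k using K_unit_step_bound[OF u, of k] by (simp add: f_def D_def b_def)
  have sDb: "summable (\<lambda>k. D * b k)"
    unfolding b_def by (intro summable_mult summable_exp_neg_mult_powr)
  have snf: "summable (\<lambda>k. norm (f k))" by (rule summable_comparison_test[OF _ sDb]) (use fb in auto)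
  have tel: "K u - (\<Sum>k<n. f k) = K (u - of_nat n)" for n
    using sum_lessThan_telescope'[of "\<lambda>k. K (u - of_nat k)" n] by (simp add: f_def)
  have "(\<lambda>n. K u - (\<Sum>k<n. f k)) \<longlonglongrightarrow> K u - suminf f"
    by (intro tendsto_intros summable_LIMSEQ summable_norm_cancel[OF snf])
  moreover have "norm (suminf f) \<le> D * ray_sum"
  proof -
    have "norm (suminf f) \<le> (\<Sum>k. norm (f k))" by (rule summable_norm[OF snf])
    also have "\<dots> \<le> (\<Sum>k. D * b k)" by (rule suminf_le[OF fb snf sDb])
    also have "\<dots> = D * ray_sum" using summable_exp_neg_mult_powr by (simp add: suminf_mult ray_sum_def b_def)
    finally show ?thesis .
  qed
  ultimately show ?thesis unfolding tel D_def by (intro exI[of _ "K u - suminf f"]) auto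
qed

lemma K_rays_asymptotic:
  assumes "admissible u" "admissible v"
  shows "(\<lambda>n. K (u - of_nat n) - K (v - of_nat n)) \<longlonglongrightarrow> 0"
proof (rule Lim_null_comparison)
  define Mr where "Mr = max (Re u) (Re v)"
  define M where "M = max (norm u) (norm v)"
  define g where "g = (\<lambda>n::nat. C * exp Mr * norm (u - v) * (exp (- real n) * (M + real n) powr \<bar>a\<bar>))"
  have "(\<lambda>n::nat. exp (- real n) * (M + real n) powr \<bar>a\<bar>) \<longlonglongrightarrow> 0" by real_asymp
  then show "g \<longlonglongrightarrow> 0" unfolding g_def by (rule tendsto_mult_right_zero)
  have "eventually (\<lambda>n. Mr + h \<le> real n) sequentially" by real_asymp
  then show "eventually (\<lambda>n. norm (K (u - of_nat n) - K (v - of_nat n)) \<le> g n) sequentially"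
  proof (rule eventually_mono)
    fix n :: nat assume n: "Mr + h \<le> real n"
    have "norm (K (u - of_nat n) - K (v - of_nat n))
       \<le> (C * exp Mr * (exp (- real n) * (M + real n) powr \<bar>a\<bar>)) * norm ((u - of_nat n) - (v - of_nat n))"
    proof (rule K_diff_le_on_segment)
      fix s assume "s \<in> closed_segment (u - of_nat n) (v - of_nat n)"
      note bounds = closed_segment_minus_nat_bounds[OF this, folded Mr_def M_def]
      have reS: "Re s \<le> Mr - real n" and nsM: "norm s \<le> M + real n" by (fact bounds)+
      have reh: "Re s \<le> - h" using reS n by simp
      then have nsh: "h \<le> norm s" using abs_Re_le_cmod[of s] by simp
      have sG: "s \<in> slitG R" using nsh R_less_h reh h_ge_1 by (auto simp: slitG_iff)
      have "norm s powr a \<le> (M + real n) powr \<bar>a\<bar>" using nsh h_ge_1 nsM by (intro powr_le_powr_abs) auto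
      moreover have "exp (Re s) \<le> exp Mr * exp (- real n)" using reS by (simp add: exp_add[symmetric])
      ultimately have "C * exp (Re s) * norm s powr a \<le> C * (exp Mr * exp (- real n)) * (M + real n) powr \<bar>a\<bar>"
        using C_nonneg by (intro mult_mono) auto
      then show "s \<in> slitG R \<and> h \<le> norm s \<and> C * exp (Re s) * norm s powr a
          \<le> C * exp Mr * (exp (- real n) * (M + real n) powr \<bar>a\<bar>)"
        using sG nsh by (simp add: mult_ac)
    qed
    then show "norm (K (u - of_nat n) - K (v - of_nat n)) \<le> g n" by (simp add: g_def mult_ac)
  qed
qed

lemma admissible_if_Im_ge:
  assumes "1 \<le> norm u" "h \<le> \<bar>Im u\<bar>"
  shows "admissible u"
  unfolding admissible_def
proof (intro conjI allI impI assms(1))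
  fix t :: real assume t: "0 \<le> t"
  have sh: "h \<le> norm (u - of_real t)" using abs_Im_le_cmod[of "u - of_real t"] assms(2) by simp
  then show "h \<le> norm (u - of_real t)" .
  have "Im (u - of_real t) \<noteq> 0" using assms(2) h_ge_1 by auto
  then show "u - of_real t \<in> slitG R" using sh R_less_h by (auto simp: slitG_iff)
  have "norm u \<le> norm (u - of_real t) + t" using norm_triangle_ineq[of "u - of_real t" "of_real t"] t by simp
  also have "\<dots> \<le> norm (u - of_real t) + t * norm (u - of_real t)"
    using t sh h_ge_1 by (intro add_left_mono) (simp add: mult_le_cancel_left1)
  finally show "norm u \<le> (1 + t) * norm (u - of_real t)" by (simp add: algebra_simps)
qed

lemma admissible_if_Re_nonpos:
  assumes "Re u \<le> 0" "h \<le> norm u"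
  shows "admissible u"
  unfolding admissible_def
proof (intro conjI allI impI)
  show "1 \<le> norm u" using assms h_ge_1 by simp
  fix t :: real assume t: "0 \<le> t"
  have "t * Re u \<le> 0" using t assms(1) by (rule mult_nonneg_nonpos)
  moreover have "(Re u - t)\<^sup>2 = (Re u)\<^sup>2 - 2 * (t * Re u) + t * t" by (simp add: power2_eq_square algebra_simps)
  ultimately have "(Re u)\<^sup>2 \<le> (Re u - t)\<^sup>2" using mult_nonneg_nonneg[OF t t] by linarith
  then have "(norm u)\<^sup>2 \<le> (norm (u - of_real t))\<^sup>2" by (simp add: cmod_power2)
  then have us: "norm u \<le> norm (u - of_real t)" by (rule power2_le_imp_le) simp
  then show "h \<le> norm (u - of_real t)" using assms by simp
  have "u \<noteq> 0" using assms h_ge_1 by auto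
  then have "\<not> (Im (u - of_real t) = 0 \<and> 0 \<le> Re (u - of_real t))"
    using assms(1) t by (auto simp: complex_eq_iff)
  then show "u - of_real t \<in> slitG R" using us assms R_less_h by (auto simp: slitG_iff)
  show "norm u \<le> (1 + t) * norm (u - of_real t)"
    using us mult_nonneg_nonneg[OF t norm_ge_zero[of "u - of_real t"]] by (simp add: algebra_simps)
qed

lemma K_limit_bound:
  "\<exists>cS. \<forall>u. admissible u \<longrightarrow> norm (K u - cS) \<le> C * exp (Re u) * norm u powr a * ray_sum"
proof -
  have "admissible (- of_real h)" using h_ge_1 by (intro admissible_if_Re_nonpos) auto
  then obtain L0 where L0: "(\<lambda>n. K (- of_real h - of_nat n)) \<longlonglongrightarrow> L0" using K_ray_limit by blast
  have "norm (K u - L0) \<le> C * exp (Re u) * norm u powr a * ray_sum" if u: "admissible u" for u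
  proof -
    obtain L where L: "(\<lambda>n. K (u - of_nat n)) \<longlonglongrightarrow> L" "norm (K u - L) \<le> C * exp (Re u) * norm u powr a * ray_sum"
      using K_ray_limit[OF u] by blast
    have "(\<lambda>n. (K (u - of_nat n) - K (- of_real h - of_nat n)) + K (- of_real h - of_nat n)) \<longlonglongrightarrow> 0 + L0"
      by (intro tendsto_add K_rays_asymptotic u \<open>admissible (- of_real h)\<close> L0)
    then have "L = L0" using L(1) LIMSEQ_unique by auto
    then show ?thesis using L(2) by simp
  qed
  then show ?thesis by blast
qed

lemma vertical_detour:
  assumes w: "w \<in> slitG R" "2 * h \<le> norm w" "Im w \<noteq> 0"
    and s: "s \<in> closed_segment w (w + \<i> * of_real (sgn (Im w) * h))"
  shows "s \<in> slitG R" "h \<le> norm s" "Re s = Re w" "norm s powr a \<le> 2 powr \<bar>a\<bar> * norm w powr a"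
proof -
  obtain \<theta> where \<theta>: "0 \<le> \<theta>" "\<theta> \<le> 1" "s = (1 - \<theta>) *\<^sub>R w + \<theta> *\<^sub>R (w + \<i> * of_real (sgn (Im w) * h))"
    using s by (auto simp: in_segment)
  then have s_eq: "s = w + \<i> * of_real (\<theta> * sgn (Im w) * h)"
    by (simp add: scaleR_conv_of_real algebra_simps)
  have "norm (s - w) = \<theta> * h" using \<theta>(1) h_ge_1 w(3) by (simp add: s_eq norm_mult abs_mult)
  also have "\<dots> \<le> h" using \<theta>(1,2) h_ge_1 by (simp add: mult_left_le_one_le)
  finally have near: "norm s \<le> norm w + h" "norm w \<le> norm s + h"
    using norm_triangle_ineq2[of s w] norm_triangle_ineq3[of s w] by (auto simp: norm_minus_commute)
  then show sh: "h \<le> norm s" using w(2) by linarith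
  have "sgn (Im w) * Im s = \<bar>Im w\<bar> + \<theta> * h"
    using w(3) by (simp add: s_eq algebra_simps abs_sgn mult.commute)
  moreover have "0 < \<bar>Im w\<bar> + \<theta> * h" using w(3) \<theta>(1) h_ge_1 by (simp add: add_pos_nonneg)
  ultimately have "Im s \<noteq> 0" by auto
  then show "s \<in> slitG R" using sh R_less_h by (auto simp: slitG_iff)
  show "Re s = Re w" by (simp add: s_eq)
  show "norm s powr a \<le> 2 powr \<bar>a\<bar> * norm w powr a"
    using near sh w(2) h_ge_1 by (intro powr_le_powr_mult_if_comparable) auto
qed

(* Near the positive real axis the leftward ray leaves the slit domain, so w is first moved
   vertically by h. *)
lemma K_vertical_step:
  assumes w: "w \<in> slitG R" "2 * h \<le> norm w" "Im w \<noteq> 0"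
  defines "w' \<equiv> w + \<i> * of_real (sgn (Im w) * h)"
  shows "admissible w'"
    and "C * exp (Re w') * norm w' powr a \<le> C * exp (Re w) * (2 powr \<bar>a\<bar> * norm w powr a)"
    and "norm (K w - K w') \<le> C * exp (Re w) * (2 powr \<bar>a\<bar> * norm w powr a) * h"
proof -
  note detour = vertical_detour[OF w, folded w'_def]
  have "h \<le> \<bar>Im w'\<bar>" using w(3) h_ge_1 by (cases "0 < Im w") (auto simp: w'_def)
  then show "admissible w'" using detour(2)[of w'] h_ge_1 by (intro admissible_if_Im_ge) auto
  have bound: "C * exp (Re s) * norm s powr a \<le> C * exp (Re w) * (2 powr \<bar>a\<bar> * norm w powr a)"
    if "s \<in> closed_segment w w'" for s
    using mult_left_mono[OF detour(4)[OF that], of "C * exp (Re w)"] detour(3)[OF that] C_nonneg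
    by (simp add: mult.assoc)
  then show "C * exp (Re w') * norm w' powr a \<le> C * exp (Re w) * (2 powr \<bar>a\<bar> * norm w powr a)"
    by simp
  have "norm (K w - K w') \<le> C * exp (Re w) * (2 powr \<bar>a\<bar> * norm w powr a) * norm (w - w')"
    using detour(1,2) bound by (intro K_diff_le_on_segment) auto
  also have "norm (w - w') = h" using w(3) h_ge_1 by (simp add: w'_def norm_mult abs_mult)
  finally show "norm (K w - K w') \<le> C * exp (Re w) * (2 powr \<bar>a\<bar> * norm w powr a) * h" .
qed

lemma K_bound:
  "\<exists>cS C'. \<forall>w. w \<in> slitG R \<and> 2 * h \<le> norm w \<longrightarrow> norm (K w - cS) \<le> C' * exp (Re w) * norm w powr a"
proof -
  obtain cS where cS: "\<And>u. admissible u \<Longrightarrow> norm (K u - cS) \<le> C * exp (Re u) * norm u powr a * ray_sum"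
    using K_limit_bound by blast
  define E where "E = (\<lambda>w. C * exp (Re w) * (2 powr \<bar>a\<bar> * norm w powr a))"
  have two: "1 \<le> (2::real) powr \<bar>a\<bar>" by (intro ge_one_powr_ge_zero) auto
  have E: "C * exp (Re w) * norm w powr a \<le> E w" "0 \<le> E w" for w
  proof -
    have "norm w powr a \<le> 2 powr \<bar>a\<bar> * norm w powr a" using two by (simp add: mult_le_cancel_right1)
    then have "C * exp (Re w) * norm w powr a \<le> C * exp (Re w) * (2 powr \<bar>a\<bar> * norm w powr a)"
      using C_nonneg by (intro mult_left_mono) auto
    then show "C * exp (Re w) * norm w powr a \<le> E w" by (simp add: E_def)
    show "0 \<le> E w" unfolding E_def using C_nonneg by simp
  qed
  have "norm (K w - cS) \<le> E w * (ray_sum + h)" if w: "w \<in> slitG R" "2 * h \<le> norm w" for w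
  proof (cases "Im w = 0")
    case True
    then have "admissible w" using w h_ge_1 by (intro admissible_if_Re_nonpos) (auto simp: slitG_iff)
    then have "norm (K w - cS) \<le> C * exp (Re w) * norm w powr a * ray_sum" by (rule cS)
    also have "\<dots> \<le> E w * ray_sum" using E(1) ray_sum_nonneg by (rule mult_right_mono)
    also have "\<dots> \<le> E w * (ray_sum + h)" using E(2)[of w] h_ge_1 by (intro mult_left_mono) auto
    finally show ?thesis .
  next
    case False
    define w' where "w' = w + \<i> * of_real (sgn (Im w) * h)"
    note step = K_vertical_step[OF w False, folded w'_def]
    have "norm (K w' - cS) \<le> E w * ray_sum"
      using cS[OF step(1)] mult_right_mono[OF step(2) ray_sum_nonneg] unfolding E_def by linarith
    moreover have "norm (K w - K w') \<le> E w * h" using step(3) unfolding E_def .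
    moreover have "norm (K w - cS) \<le> norm (K w - K w') + norm (K w' - cS)"
      using norm_triangle_ineq[of "K w - K w'" "K w' - cS"] by (simp add: algebra_simps)
    ultimately have "norm (K w - cS) \<le> E w * ray_sum + E w * h" by linarith
    then show ?thesis by (simp add: distrib_left)
  qed
  then show ?thesis
    by (intro exI[of _ cS] exI[of _ "C * 2 powr \<bar>a\<bar> * (ray_sum + h)"] allI impI)
       (simp add: E_def mult_ac)
qed

end

section \<open>The correction term\<close>

lemma degree_coeff_mult_at_bounds:
  fixes A B :: "'a::comm_semiring_1 poly"
  assumes "degree A \<le> a" "degree B \<le> b"
  shows "degree (A * B) \<le> a + b" "coeff (A * B) (a + b) = coeff A a * coeff B b"
proof -
  show "degree (A * B) \<le> a + b" using assms by (meson add_mono degree_mult_le le_trans)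
  have "coeff (A * B) (a + b) = (\<Sum>i\<le>a+b. coeff A i * coeff B (a + b - i))"
    by (simp add: coeff_mult)
  also have "\<dots> = (\<Sum>i\<in>{a}. coeff A i * coeff B (a + b - i))"
  proof (rule sum.mono_neutral_right)
    show "\<forall>i\<in>{..a + b} - {a}. coeff A i * coeff B (a + b - i) = 0"
    proof
      fix i assume i: "i \<in> {..a + b} - {a}"
      show "coeff A i * coeff B (a + b - i) = 0"
      proof (cases "i < a")
        case True
        then show ?thesis using assms(2) by (simp add: coeff_eq_0)
      next
        case False
        then show ?thesis using i assms(1) by (simp add: coeff_eq_0)
      qed
    qed
  qed auto
  finally show "coeff (A * B) (a + b) = coeff A a * coeff B b" by simp
qed

(* euler_deriv A is z A'(z): it preserves degree bounds, which keeps the degree bookkeeping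
   below free of truncated subtraction. *)
definition euler_deriv :: "'a::{comm_semiring_1,semiring_no_zero_divisors} poly \<Rightarrow> 'a poly" where
  "euler_deriv A = pCons 0 (pderiv A)"

lemma poly_euler_deriv [simp]: "poly (euler_deriv A) z = z * poly (pderiv A) z"
  by (simp add: euler_deriv_def)

lemma coeff_euler_deriv: "coeff (euler_deriv A) n = of_nat n * coeff A n"
  by (cases n) (simp_all add: euler_deriv_def coeff_pderiv)

lemma degree_euler_deriv_le: "degree (euler_deriv A) \<le> degree A"
  by (rule degree_le) (simp add: coeff_euler_deriv coeff_eq_0)

lemma pderiv_euler_deriv: "pderiv (euler_deriv A) = pderiv A + euler_deriv (pderiv A)"
  by (simp add: euler_deriv_def pderiv_pCons)

definition defect_numerator :: "'a::idom poly \<Rightarrow> 'a poly \<Rightarrow> 'a \<Rightarrow> 'a poly" where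
  "defect_numerator p q lam =
     smult lam (p * (1 - q) * euler_deriv q ^ 2)
     - (euler_deriv p * euler_deriv q - p * (euler_deriv (euler_deriv q) - euler_deriv q))
       * (q + [:lam:]) * q"

lemma euler_wronskian_top_coeff:
  fixes p q :: "'a::idom poly"
  assumes dp: "degree p \<le> m" and dq: "degree q \<le> d" and lq: "coeff q d = 1"
  defines "A \<equiv> euler_deriv p * euler_deriv q - p * (euler_deriv (euler_deriv q) - euler_deriv q)"
  shows "degree A \<le> m + d" "coeff A (m + d) = coeff p m * of_nat d * (of_nat m - of_nat d + 1)"
proof -
  have Ep: "degree (euler_deriv p) \<le> m" using dp degree_euler_deriv_le[of p] by simp
  have Eq: "degree (euler_deriv q) \<le> d" using dq degree_euler_deriv_le[of q] by simp
  have Q2: "degree (euler_deriv (euler_deriv q) - euler_deriv q) \<le> d"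
    using Eq degree_euler_deriv_le[of "euler_deriv q"] by (auto intro: degree_diff_le)
  show "degree A \<le> m + d"
    unfolding A_def
    by (rule degree_diff_le[OF degree_coeff_mult_at_bounds(1)[OF Ep Eq] degree_coeff_mult_at_bounds(1)[OF dp Q2]])
  show "coeff A (m + d) = coeff p m * of_nat d * (of_nat m - of_nat d + 1)"
    unfolding A_def coeff_diff degree_coeff_mult_at_bounds(2)[OF Ep Eq] degree_coeff_mult_at_bounds(2)[OF dp Q2]
    using lq by (simp add: coeff_euler_deriv algebra_simps)
qed

(* This cancellation is what singles out the value of lam. *)
lemma defect_numerator_top_coeff:
  fixes p q :: "'a::idom poly"
  assumes dp: "degree p \<le> m" and dq: "degree q \<le> d" and d1: "1 \<le> d" and lq: "coeff q d = 1"
    and lam: "lam * of_nat d = of_nat d - 1 - of_nat m"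
  shows "degree (defect_numerator p q lam) \<le> m + 3 * d"
    and "coeff (defect_numerator p q lam) (m + 3 * d) = 0"
proof -
  define A where "A = euler_deriv p * euler_deriv q - p * (euler_deriv (euler_deriv q) - euler_deriv q)"
  define L where "L = coeff p m"
  have N: "defect_numerator p q lam
      = smult lam (p * (1 - q) * (euler_deriv q * euler_deriv q)) - A * (q + [:lam:]) * q"
    by (simp add: defect_numerator_def A_def power2_eq_square)
  have A: "degree A \<le> m + d" "coeff A (m + d) = L * of_nat d * (of_nat m - of_nat d + 1)"
    using euler_wronskian_top_coeff[OF dp dq lq] by (simp_all add: A_def L_def)
  have Eq: "degree (euler_deriv q) \<le> d" "coeff (euler_deriv q) d = of_nat d"
    using dq degree_euler_deriv_le[of q] lq by (auto simp: coeff_euler_deriv)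
  have ql: "degree (q + [:lam:]) \<le> d" "coeff (q + [:lam:]) d = 1"
    using dq lq d1 by (auto intro: degree_add_le simp: coeff_pCons split: nat.splits)
  have q1m: "degree (1 - q) \<le> d" "coeff (1 - q) d = -1"
    using dq lq d1 by (auto intro: degree_diff_le)
  note B1 = degree_coeff_mult_at_bounds[OF A(1) ql(1)] and B = degree_coeff_mult_at_bounds[OF B1(1) dq]
  note C1 = degree_coeff_mult_at_bounds[OF dp q1m(1)] and C2 = degree_coeff_mult_at_bounds[OF Eq(1) Eq(1)]
  note C = degree_coeff_mult_at_bounds[OF C1(1) C2(1)]
  show "degree (defect_numerator p q lam) \<le> m + 3 * d"
    unfolding N using B(1) C(1) by (intro degree_diff_le order_trans[OF degree_smult_le]) auto
  have "coeff (A * (q + [:lam:]) * q) (m + 3 * d) = L * of_nat d * (of_nat m - of_nat d + 1)"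
    using B(2) B1(2) A(2) ql(2) lq by (simp add: numeral_3_eq_3 add.assoc)
  moreover have "coeff (p * (1 - q) * (euler_deriv q * euler_deriv q)) (m + 3 * d) = - L * of_nat d * of_nat d"
    using C(2) C1(2) C2(2) q1m(2) Eq(2) by (simp add: L_def numeral_3_eq_3 add.assoc)
  ultimately have "coeff (defect_numerator p q lam) (m + 3 * d)
      = lam * (- L * of_nat d * of_nat d) - L * of_nat d * (of_nat m - of_nat d + 1)"
    unfolding N coeff_diff coeff_smult by simp
  also have "\<dots> = - L * of_nat d * (lam * of_nat d - (of_nat d - 1 - of_nat m))"
    by (simp add: algebra_simps)
  finally show "coeff (defect_numerator p q lam) (m + 3 * d) = 0"
    using lam by simp
qed

definition main_term :: "complex poly \<Rightarrow> complex poly \<Rightarrow> complex \<Rightarrow> complex \<Rightarrow> complex" where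
  "main_term p q lam z = poly p z / poly (pderiv q) z * (1 + lam / poly q z) * exp (poly q z)"

definition defect :: "complex poly \<Rightarrow> complex poly \<Rightarrow> complex \<Rightarrow> complex \<Rightarrow> complex" where
  "defect p q lam z = lam * poly p z / poly q z ^ 2 - lam * poly p z / poly q z
     - (poly (pderiv p) z * poly (pderiv q) z - poly p z * poly (pderiv (pderiv q)) z)
       / poly (pderiv q) z ^ 2 * (1 + lam / poly q z)"

lemma has_field_derivative_main_term:
  assumes "poly (pderiv q) z \<noteq> 0" "poly q z \<noteq> 0"
  shows "(main_term p q lam has_field_derivative exp (poly q z) * (poly p z - defect p q lam z)) (at z)"
  unfolding main_term_def
  by (rule derivative_eq_intros refl assms)+
     (use assms in \<open>simp add: defect_def field_simps power2_eq_square\<close>)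

lemma defect_div_pderiv_eq:
  assumes "z \<noteq> 0" "poly (pderiv q) z \<noteq> 0" "poly q z \<noteq> 0"
  shows "defect p q lam z / poly (pderiv q) z
    = poly (defect_numerator p q lam) z * z / (poly (euler_deriv q) z ^ 3 * poly q z ^ 2)"
  using assms by (simp add: defect_def defect_numerator_def pderiv_euler_deriv
      field_simps power2_eq_square power3_eq_cube)

locale poly_exp_setting =
  fixes p q :: "complex poly" and m d :: nat and R :: real
  assumes degree_p: "degree p = m" and lead_coeff_p: "lead_coeff p = of_nat d"
    and degree_q: "degree q = d" and d_pos: "1 \<le> d" and lead_coeff_q: "lead_coeff q = 1"
    and R_pos: "0 < R"
    and critical_values: "\<And>z. poly (pderiv q) z = 0 \<Longrightarrow> poly q z \<in> ball 0 R"
    and q_growth: "\<And>z. (1/2) * R powr (1 / real d) \<le> norm z \<Longrightarrow>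
           (1/2) ^ d * norm z ^ d \<le> norm (poly q z) \<and> norm (poly q z) \<le> 2 ^ d * norm z ^ d"
begin

definition lam :: complex where "lam = (of_nat d - 1 - of_nat m) / of_nat d"

definition \<alpha> :: real where "\<alpha> = (real m - 2 * real d) / real d"

lemma lam_mult_d: "lam * of_nat d = of_nat d - 1 - of_nat m"
  using d_pos by (simp add: lam_def)

lemma p_nonzero: "p \<noteq> 0"
  using lead_coeff_p d_pos by auto

lemma pderiv_q_nonzero: "R \<le> norm (poly q z) \<Longrightarrow> poly (pderiv q) z \<noteq> 0"
  using critical_values[of z] by auto

lemma degree_euler_deriv_q: "degree (euler_deriv q) = d"
proof (rule antisym)
  show "degree (euler_deriv q) \<le> d" using degree_euler_deriv_le[of q] degree_q by simp
  show "d \<le> degree (euler_deriv q)"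
    using lead_coeff_q degree_q d_pos by (intro le_degree) (simp add: coeff_euler_deriv)
qed

lemma defect_numerator_bound:
  "\<exists>C\<ge>0. \<forall>z. 1 \<le> norm z \<longrightarrow> norm (poly (defect_numerator p q lam) z) * norm z \<le> C * norm z ^ (m + 3 * d)"
  using defect_numerator_top_coeff[of p m q d lam] degree_p degree_q d_pos lead_coeff_q lam_mult_d
  by (intro poly_norm_mult_le_if_top_coeff_zero) auto

lemma q_powr_comparable:
  assumes z: "(1/2) * R powr (1 / real d) \<le> norm z"
  shows "0 < norm (poly q z)"
    and "norm (poly q z) powr e \<le> (2 ^ d) powr \<bar>e\<bar> * (norm z ^ d) powr e"
    and "(norm z ^ d) powr e \<le> (2 ^ d) powr \<bar>e\<bar> * norm (poly q z) powr e"
proof -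
  have "0 < (1/2) * R powr (1 / real d)" using R_pos by simp
  then have t: "0 < norm z" using z by linarith
  have lo: "norm z ^ d \<le> 2 ^ d * norm (poly q z)" and up: "norm (poly q z) \<le> 2 ^ d * norm z ^ d"
    using q_growth[OF z] by (auto simp: power_one_over divide_le_eq mult.commute)
  have "0 < 2 ^ d * norm (poly q z)" using lo t by (meson less_le_trans zero_less_power)
  then show "0 < norm (poly q z)" by (simp add: zero_less_mult_iff)
  then show "norm (poly q z) powr e \<le> (2 ^ d) powr \<bar>e\<bar> * (norm z ^ d) powr e"
    and "(norm z ^ d) powr e \<le> (2 ^ d) powr \<bar>e\<bar> * norm (poly q z) powr e"
    using lo up t by (auto intro: powr_le_powr_mult_if_comparable)
qed

lemma defect_denominator_lower_bound:
  "\<exists>D Z. 0 < D \<and> (\<forall>z. Z \<le> norm z \<longrightarrow>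
     D * norm z ^ (5 * d) \<le> norm (poly (euler_deriv q) z) ^ 3 * norm (poly q z) ^ 2)"
proof -
  obtain c Z where c: "0 < c" and Z: "\<And>z. Z \<le> norm z \<Longrightarrow> c * norm z ^ d \<le> norm (poly (euler_deriv q) z)"
    using poly_norm_ge_power_degree[of "euler_deriv q"] degree_euler_deriv_q d_pos by fastforce
  have "c ^ 3 * (1/2) ^ (2 * d) * norm z ^ (5 * d) \<le> norm (poly (euler_deriv q) z) ^ 3 * norm (poly q z) ^ 2"
    if z: "max Z ((1/2) * R powr (1 / real d)) \<le> norm z" for z
  proof -
    have "c ^ 3 * (1/2) ^ (2 * d) * norm z ^ (5 * d) = (c * norm z ^ d) ^ 3 * ((1/2) ^ d * norm z ^ d) ^ 2"
      by (simp add: power_mult_distrib power_add[symmetric] power_mult[symmetric] algebra_simps)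
    also have "\<dots> \<le> norm (poly (euler_deriv q) z) ^ 3 * norm (poly q z) ^ 2"
      using Z[of z] q_growth[of z] z c by (intro mult_mono power_mono) auto
    finally show ?thesis .
  qed
  then show ?thesis
    using c by (intro exI[of _ "c ^ 3 * (1/2) ^ (2 * d)"] exI[of _ "max Z ((1/2) * R powr (1 / real d))"]) auto
qed

lemma defect_bound_large:
  "\<exists>C Z. \<forall>z. Z \<le> norm z \<longrightarrow> norm (defect p q lam z / poly (pderiv q) z) \<le> C * norm (poly q z) powr \<alpha>"
proof -
  obtain CN where CN0: "0 \<le> CN" and CN: "\<And>z. 1 \<le> norm z \<Longrightarrow>
      norm (poly (defect_numerator p q lam) z) * norm z \<le> CN * norm z ^ (m + 3 * d)"
    using defect_numerator_bound by blast
  obtain D Z where D: "0 < D" and den: "\<And>z. Z \<le> norm z \<Longrightarrow>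
      D * norm z ^ (5 * d) \<le> norm (poly (euler_deriv q) z) ^ 3 * norm (poly q z) ^ 2"
    using defect_denominator_lower_bound by blast
  have "norm (defect p q lam z / poly (pderiv q) z) \<le> CN / D * (2 ^ d) powr \<bar>\<alpha>\<bar> * norm (poly q z) powr \<alpha>"
    if z: "max (max 1 Z) ((1/2) * R powr (1 / real d)) \<le> norm z" for z
  proof -
    define t where "t = norm z"
    have t1: "1 \<le> t" and tR: "(1/2) * R powr (1 / real d) \<le> norm z"
      and den_z: "D * t ^ (5 * d) \<le> norm (poly (euler_deriv q) z) ^ 3 * norm (poly q z) ^ 2"
      using z den[of z] by (auto simp: t_def)
    have "0 < D * t ^ (5 * d)" using D t1 by simp
    then have nz: "poly (euler_deriv q) z \<noteq> 0" "poly q z \<noteq> 0" using den_z by auto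
    have pw: "t ^ (m + 3 * d) / t ^ (5 * d) = (t ^ d) powr \<alpha>"
      using power_div_power_eq_powr[of t d "m + 3 * d" "5 * d"] t1 d_pos by (simp add: \<alpha>_def algebra_simps)
    have "norm (defect p q lam z / poly (pderiv q) z)
        = norm (poly (defect_numerator p q lam) z) * t / (norm (poly (euler_deriv q) z) ^ 3 * norm (poly q z) ^ 2)"
      using nz by (subst defect_div_pderiv_eq) (auto simp: norm_mult norm_divide norm_power t_def)
    also have "\<dots> \<le> CN * t ^ (m + 3 * d) / (D * t ^ (5 * d))"
    proof (rule frac_le)
      show "norm (poly (defect_numerator p q lam) z) * t \<le> CN * t ^ (m + 3 * d)"
        using CN[of z] t1 by (simp add: t_def)
    qed (use CN0 t1 D den_z in auto)
    also have "\<dots> = CN / D * (t ^ (m + 3 * d) / t ^ (5 * d))" by simp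
    also have "\<dots> = CN / D * (t ^ d) powr \<alpha>" by (simp only: pw)
    also have "\<dots> \<le> CN / D * ((2 ^ d) powr \<bar>\<alpha>\<bar> * norm (poly q z) powr \<alpha>)"
      using q_powr_comparable(3)[OF tR] CN0 D by (intro mult_left_mono) (auto simp: t_def)
    finally show ?thesis by (simp add: mult_ac)
  qed
  then show ?thesis by blast
qed

lemma defect_bound:
  "\<exists>C. \<forall>z. R + 1 \<le> norm (poly q z) \<longrightarrow> norm (defect p q lam z / poly (pderiv q) z) \<le> C * norm (poly q z) powr \<alpha>"
proof -
  obtain C Z where C: "\<And>z. Z \<le> norm z \<Longrightarrow> norm (defect p q lam z / poly (pderiv q) z) \<le> C * norm (poly q z) powr \<alpha>"
    using defect_bound_large by blast
  define K where "K = cball 0 Z \<inter> {z. R + 1 \<le> norm (poly q z)}"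
  have "compact K"
    unfolding K_def by (intro compact_Int_closed compact_cball closed_Collect_le continuous_intros)
  moreover have "continuous_on K (\<lambda>z. norm (defect p q lam z / poly (pderiv q) z) / norm (poly q z) powr \<alpha>)"
    using R_pos pderiv_q_nonzero unfolding defect_def K_def by (intro continuous_intros) auto
  ultimately have "bounded ((\<lambda>z. norm (defect p q lam z / poly (pderiv q) z) / norm (poly q z) powr \<alpha>) ` K)"
    by (intro compact_imp_bounded compact_continuous_image)
  then obtain B where B: "\<And>z. z \<in> K \<Longrightarrow> norm (defect p q lam z / poly (pderiv q) z) / norm (poly q z) powr \<alpha> \<le> B"
    unfolding bounded_iff by fastforce
  have "norm (defect p q lam z / poly (pderiv q) z) \<le> max C B * norm (poly q z) powr \<alpha>"
    if z: "R + 1 \<le> norm (poly q z)" for z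
  proof -
    have pos: "0 < norm (poly q z) powr \<alpha>" using z R_pos by auto
    have "norm (defect p q lam z / poly (pderiv q) z) \<le> (if Z \<le> norm z then C else B) * norm (poly q z) powr \<alpha>"
      using C[of z] B[of z] z pos by (auto simp: K_def divide_le_eq)
    also have "\<dots> \<le> max C B * norm (poly q z) powr \<alpha>"
      using pos by (intro mult_right_mono) auto
    finally show ?thesis .
  qed
  then show ?thesis by blast
qed

lemma pderiv_ratio_lower_bound:
  "\<exists>c Z. 0 < c \<and> (\<forall>z. Z \<le> norm z \<longrightarrow>
     c * norm (poly q z) powr (\<alpha> + 1 + 1 / real d) \<le> norm (poly p z / poly (pderiv q) z))"
proof -
  define e where "e = \<alpha> + 1 + 1 / real d"
  have e: "e = (real (Suc m) - real d) / real d" using d_pos by (simp add: e_def \<alpha>_def field_simps)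
  obtain cp Zp where cp: "0 < cp" and Zp: "\<And>z. Zp \<le> norm z \<Longrightarrow> cp * norm z ^ m \<le> norm (poly p z)"
    using poly_norm_ge_power_degree[OF p_nonzero] degree_p by auto
  obtain CQ where CQ: "0 < CQ" "\<And>z. 1 \<le> norm z \<Longrightarrow> norm (poly (euler_deriv q) z) \<le> CQ * norm z ^ d"
    using poly_norm_le_power_if_degree_le[of "euler_deriv q" d] degree_euler_deriv_q by auto
  obtain cQ ZQ where cQ: "0 < cQ" and ZQ: "\<And>z. ZQ \<le> norm z \<Longrightarrow> cQ * norm z ^ d \<le> norm (poly (euler_deriv q) z)"
    using poly_norm_ge_power_degree[of "euler_deriv q"] degree_euler_deriv_q d_pos by fastforce
  have "cp / CQ / (2 ^ d) powr \<bar>e\<bar> * norm (poly q z) powr e \<le> norm (poly p z / poly (pderiv q) z)"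
    if z: "max (max 1 Zp) (max ZQ ((1/2) * R powr (1 / real d))) \<le> norm z" for z
  proof -
    define t where "t = norm z"
    have t1: "1 \<le> t" and tR: "(1/2) * R powr (1 / real d) \<le> t"
      using z by (auto simp: t_def)
    have ZQt: "ZQ \<le> norm z" using z by simp
    have "0 < cQ * t ^ d" using cQ t1 by simp
    also have "\<dots> \<le> norm (poly (euler_deriv q) z)" using ZQ[OF ZQt] by (simp only: t_def)
    finally have Eq0: "0 < norm (poly (euler_deriv q) z)" .
    have q1: "norm (poly (pderiv q) z) = norm (poly (euler_deriv q) z) / t"
      using t1 by (simp add: norm_mult t_def) (metis norm_zero not_one_le_zero)
    have "t ^ Suc m / t ^ d = (t ^ d) powr e"
      using power_div_power_eq_powr[of t d "Suc m" d] t1 d_pos by (simp add: e)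
    then have "cp / CQ * (t ^ d) powr e = cp * t ^ m / (CQ * t ^ d / t)"
      using t1 CQ by (simp add: field_simps)
    also have "\<dots> \<le> norm (poly p z) / norm (poly (pderiv q) z)"
      unfolding q1 using Zp[of z] CQ(2)[of z] z t1 Eq0 cp CQ(1)
      by (intro frac_le divide_right_mono) (auto simp: t_def)
    finally have lower: "cp / CQ * (t ^ d) powr e \<le> norm (poly p z / poly (pderiv q) z)"
      by (simp add: norm_divide)
    have "norm (poly q z) powr e / (2 ^ d) powr \<bar>e\<bar> \<le> (t ^ d) powr e"
      using q_powr_comparable(2)[OF tR[unfolded t_def]] by (simp add: divide_le_eq mult.commute t_def)
    then have "cp / CQ * (norm (poly q z) powr e / (2 ^ d) powr \<bar>e\<bar>) \<le> cp / CQ * (t ^ d) powr e"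
      using cp CQ(1) by (intro mult_left_mono) auto
    then show ?thesis using lower by simp
  qed
  then show ?thesis
    using cp CQ(1) unfolding e_def
    by (intro exI[of _ "cp / CQ / (2 ^ d) powr \<bar>e\<bar>"]
        exI[of _ "max (max 1 Zp) (max ZQ ((1/2) * R powr (1 / real d)))"]) (simp add: e_def)
qed

end

section \<open>The asymptotic expansion\<close>

lemma has_field_derivative_integral_linepath_0:
  assumes "f holomorphic_on UNIV"
  shows "((\<lambda>z. contour_integral (linepath 0 z) f) has_field_derivative f z) (at z)"
proof (rule triangle_contour_integrals_starlike_primitive[of UNIV])
  show "continuous_on UNIV f" using assms holomorphic_on_imp_continuous_on by blast
  fix b c :: complex
  show "contour_integral (linepath 0 b) f + contour_integral (linepath b c) f + contour_integral (linepath c 0) f = 0"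
    using assms by (intro has_chain_integral_chain_integral3 Cauchy_theorem_triangle) (auto intro: holomorphic_on_subset)
qed auto

locale poly_exp_branch = poly_exp_setting +
  fixes S :: "complex set" and \<phi> :: "complex \<Rightarrow> complex"
  assumes S_component: "S \<in> components (poly q -` slitG R)"
    and q_\<phi>: "\<And>w. w \<in> slitG R \<Longrightarrow> poly q (\<phi> w) = w"
    and \<phi>_image: "\<phi> ` slitG R = S"
begin

lemma no_critical_points_over_slitG: "poly q z \<in> slitG R \<Longrightarrow> poly (pderiv q) z \<noteq> 0"
  using critical_values[of z] by (auto simp: slitG_iff)

lemma \<phi>_q: "z \<in> S \<Longrightarrow> \<phi> (poly q z) = z"
proof (rule covering_space_section_inverse[where f = "poly q" and G = "slitG R"])
  show "covering_space (poly q -` slitG R) (poly q) (slitG R)"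
    using degree_q d_pos no_critical_points_over_slitG by (intro poly_covering_space open_slitG) auto
  show "locally path_connected (slitG R)" by (rule open_imp_locally_path_connected[OF open_slitG])
qed (use simply_connected_slitG[OF R_pos] S_component q_\<phi> \<phi>_image in auto)

lemma has_field_derivative_\<phi>:
  assumes w: "w \<in> slitG R"
  shows "(\<phi> has_field_derivative inverse (poly (pderiv q) (\<phi> w))) (at w)"
proof -
  have "open S"
    by (intro open_components[OF _ S_component] open_vimage open_slitG continuous_intros)
  moreover have "\<phi> w \<in> S" using \<phi>_image w by blast
  ultimately have "(\<phi> has_field_derivative inverse (poly (pderiv q) (\<phi> w))) (at (poly q (\<phi> w)))"
    using no_critical_points_over_slitG q_\<phi> w \<phi>_q
    by (intro has_field_derivative_inverse_strong[OF poly_DERIV]) (auto intro: continuous_intros)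
  then show ?thesis using q_\<phi> w by simp
qed

lemma has_field_derivative_remainder:
  assumes g: "\<And>z. g z = contour_integral (linepath 0 z) (\<lambda>t. poly p t * exp (poly q t)) + c"
    and w: "w \<in> slitG R"
  shows "((\<lambda>w. g (\<phi> w) - main_term p q lam (\<phi> w)) has_field_derivative
           exp w * (defect p q lam (\<phi> w) / poly (pderiv q) (\<phi> w))) (at w)"
proof -
  define z where "z = \<phi> w"
  have qz: "poly q z = w" using q_\<phi> w by (simp add: z_def)
  have q1z: "poly (pderiv q) z \<noteq> 0" using no_critical_points_over_slitG w qz by simp
  have qz0: "poly q z \<noteq> 0" using w qz R_pos by (auto simp: slitG_iff)
  have hol: "(\<lambda>t. poly p t * exp (poly q t)) holomorphic_on UNIV"
    by (intro holomorphic_on_mult holomorphic_on_exp' holomorphic_on_poly)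
  have "g = (\<lambda>z. contour_integral (linepath 0 z) (\<lambda>t. poly p t * exp (poly q t)) + c)"
    using g by auto
  then have "(g has_field_derivative poly p z * exp (poly q z)) (at z)"
    using DERIV_add[OF has_field_derivative_integral_linepath_0[OF hol] DERIV_const] by simp
  then have "((\<lambda>z. g z - main_term p q lam z) has_field_derivative exp (poly q z) * defect p q lam z) (at z)"
    by (rule DERIV_cong[OF DERIV_diff[OF _ has_field_derivative_main_term[OF q1z qz0]]])
       (simp add: algebra_simps)
  from DERIV_chain2[OF this[unfolded z_def] has_field_derivative_\<phi>[OF w]]
  show ?thesis using qz by (simp add: z_def divide_inverse mult.assoc)
qed

lemma remainder_bound:
  assumes g: "\<And>z. g z = contour_integral (linepath 0 z) (\<lambda>t. poly p t * exp (poly q t)) + c"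
  shows "\<exists>cS C. \<forall>w. w \<in> slitG R \<and> 2 * (R + 1) \<le> norm w \<longrightarrow>
           norm (g (\<phi> w) - main_term p q lam (\<phi> w) - cS) \<le> C * exp (Re w) * norm w powr \<alpha>"
proof -
  obtain C0 where C0: "\<And>z. R + 1 \<le> norm (poly q z) \<Longrightarrow>
      norm (defect p q lam z / poly (pderiv q) z) \<le> C0 * norm (poly q z) powr \<alpha>"
    using defect_bound by blast
  interpret slit_exp_bound "\<lambda>w. g (\<phi> w) - main_term p q lam (\<phi> w)"
    "\<lambda>w. exp w * (defect p q lam (\<phi> w) / poly (pderiv q) (\<phi> w))" R "R + 1" "max C0 0" \<alpha>
  proof
    show "1 \<le> R + 1" "R < R + 1" "0 \<le> max C0 0" using R_pos by auto
    fix s assume s: "s \<in> slitG R"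
    then show "((\<lambda>w. g (\<phi> w) - main_term p q lam (\<phi> w)) has_field_derivative
        exp s * (defect p q lam (\<phi> s) / poly (pderiv q) (\<phi> s))) (at s)"
      by (rule has_field_derivative_remainder[OF g])
    assume "R + 1 \<le> norm s"
    then have "norm (defect p q lam (\<phi> s) / poly (pderiv q) (\<phi> s)) \<le> C0 * norm s powr \<alpha>"
      using C0[of "\<phi> s"] q_\<phi>[OF s] by simp
    also have "\<dots> \<le> max C0 0 * norm s powr \<alpha>" by (intro mult_right_mono) auto
    finally have bound: "norm (defect p q lam (\<phi> s) / poly (pderiv q) (\<phi> s)) \<le> max C0 0 * norm s powr \<alpha>" .
    have "norm (exp s * (defect p q lam (\<phi> s) / poly (pderiv q) (\<phi> s)))
        = exp (Re s) * norm (defect p q lam (\<phi> s) / poly (pderiv q) (\<phi> s))"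
      by (simp only: norm_mult norm_exp_eq_Re)
    also have "\<dots> \<le> exp (Re s) * (max C0 0 * norm s powr \<alpha>)" by (rule mult_left_mono[OF bound]) simp
    finally show "norm (exp s * (defect p q lam (\<phi> s) / poly (pderiv q) (\<phi> s)))
        \<le> max C0 0 * exp (Re s) * norm s powr \<alpha>"
      by (simp add: mult_ac)
  qed
  show ?thesis using K_bound by simp
qed

lemma exp_weight_bound:
  "\<exists>C. eventually (\<lambda>w. w \<in> slitG R \<longrightarrow> exp (Re w) * norm w powr \<alpha>
     \<le> C * norm (poly p (\<phi> w) / poly (pderiv q) (\<phi> w) * exp w) * norm w powr (- 1 - 1 / real d)) at_infinity"
proof -
  obtain c Z where c: "0 < c" and Z: "\<And>z. Z \<le> norm z \<Longrightarrow>
      c * norm (poly q z) powr (\<alpha> + 1 + 1 / real d) \<le> norm (poly p z / poly (pderiv q) z)"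
    using pderiv_ratio_lower_bound by blast
  have "compact (poly q ` cball 0 Z)" by (intro compact_continuous_image continuous_intros compact_cball)
  then have "bounded (poly q ` cball 0 Z)" by (rule compact_imp_bounded)
  then obtain Mq where "\<forall>x\<in>poly q ` cball 0 Z. norm x \<le> Mq" unfolding bounded_iff by blast
  then have Mq: "\<And>z. z \<in> cball 0 Z \<Longrightarrow> norm (poly q z) \<le> Mq" by blast
  have "exp (Re w) * norm w powr \<alpha>
      \<le> 1 / c * norm (poly p (\<phi> w) / poly (pderiv q) (\<phi> w) * exp w) * norm w powr (- 1 - 1 / real d)"
    if w: "w \<in> slitG R" "Mq + 1 \<le> norm w" for w
  proof -
    have qw: "poly q (\<phi> w) = w" using q_\<phi> w(1) by simp
    have "\<phi> w \<notin> cball 0 Z"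
    proof
      assume "\<phi> w \<in> cball 0 Z"
      then have "norm w \<le> Mq" using Mq[of "\<phi> w"] qw by simp
      then show False using w(2) by linarith
    qed
    then have "c * norm w powr (\<alpha> + 1 + 1 / real d) \<le> norm (poly p (\<phi> w) / poly (pderiv q) (\<phi> w))"
      using Z[of "\<phi> w"] qw by simp
    then have P: "norm w powr (\<alpha> + 1 + 1 / real d) \<le> norm (poly p (\<phi> w) / poly (pderiv q) (\<phi> w)) / c"
      using c by (simp add: field_simps)
    have "exp (Re w) * norm w powr \<alpha>
        = exp (Re w) * norm w powr (\<alpha> + 1 + 1 / real d) * norm w powr (- 1 - 1 / real d)"
      by (simp add: powr_add[symmetric])
    also have "\<dots> \<le> exp (Re w) * (norm (poly p (\<phi> w) / poly (pderiv q) (\<phi> w)) / c) * norm w powr (- 1 - 1 / real d)"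
      using P by (intro mult_right_mono mult_left_mono) auto
    also have "\<dots> = 1 / c * norm (poly p (\<phi> w) / poly (pderiv q) (\<phi> w) * exp w) * norm w powr (- 1 - 1 / real d)"
      unfolding norm_mult[of "poly p (\<phi> w) / poly (pderiv q) (\<phi> w)"] norm_exp_eq_Re by simp
    finally show ?thesis .
  qed
  then show ?thesis unfolding eventually_at_infinity by blast
qed

lemma main_term_\<phi>:
  "w \<in> slitG R \<Longrightarrow> main_term p q lam (\<phi> w)
     = poly p (\<phi> w) / poly (pderiv q) (\<phi> w) * (1 + ((of_nat d - 1 - of_nat m) / of_nat d) / w) * exp w"
  by (simp add: main_term_def q_\<phi> lam_def)

lemma remainder_asymptotics:
  assumes g: "\<And>z. g z = contour_integral (linepath 0 z) (\<lambda>t. poly p t * exp (poly q t)) + c"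
  shows "\<exists>cS C. eventually (\<lambda>w. w \<in> slitG R \<longrightarrow> norm (g (\<phi> w) - cS - main_term p q lam (\<phi> w))
           \<le> C * norm (poly p (\<phi> w) / poly (pderiv q) (\<phi> w) * exp w) * norm w powr (- 1 - 1 / real d))
           at_infinity"
proof -
  obtain cS C1 where C1: "\<And>w. w \<in> slitG R \<Longrightarrow> 2 * (R + 1) \<le> norm w \<Longrightarrow>
      norm (g (\<phi> w) - main_term p q lam (\<phi> w) - cS) \<le> C1 * exp (Re w) * norm w powr \<alpha>"
    using remainder_bound[OF g] by blast
  obtain C2 where C2: "eventually (\<lambda>w. w \<in> slitG R \<longrightarrow> exp (Re w) * norm w powr \<alpha>
      \<le> C2 * norm (poly p (\<phi> w) / poly (pderiv q) (\<phi> w) * exp w) * norm w powr (- 1 - 1 / real d)) at_infinity"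
    using exp_weight_bound by blast
  have large: "eventually (\<lambda>w. 2 * (R + 1) \<le> norm w) at_infinity"
    unfolding eventually_at_infinity by blast
  have key: "norm (g (\<phi> w) - cS - main_term p q lam (\<phi> w)) \<le> max C1 0 * B"
    if "w \<in> slitG R" "2 * (R + 1) \<le> norm w" "exp (Re w) * norm w powr \<alpha> \<le> B" for w B
  proof -
    have "g (\<phi> w) - cS - main_term p q lam (\<phi> w) = g (\<phi> w) - main_term p q lam (\<phi> w) - cS"
      by (simp add: algebra_simps)
    then have "norm (g (\<phi> w) - cS - main_term p q lam (\<phi> w)) \<le> C1 * (exp (Re w) * norm w powr \<alpha>)"
      using C1[OF that(1,2)] by (simp only: mult.assoc)
    also have "\<dots> \<le> max C1 0 * (exp (Re w) * norm w powr \<alpha>)" by (rule mult_right_mono) auto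
    also have "\<dots> \<le> max C1 0 * B" using that(3) by (rule mult_left_mono) auto
    finally show ?thesis .
  qed
  show ?thesis
    using eventually_conj[OF large C2]
    by (intro exI[of _ cS] exI[of _ "max C1 0 * C2"])
       (erule eventually_mono; use key in \<open>simp add: mult.assoc\<close>)
qed

end

theorem lemma4p1:
  fixes p q :: "complex poly" and m d :: nat and c :: complex and R :: real
    and g \<phi> :: "complex \<Rightarrow> complex" and S :: "complex set"
  assumes "degree p = m" and "lead_coeff p = of_nat d"
    and "degree q = d" and "d \<ge> 1" and "lead_coeff q = 1"
    and "\<And>z. g z = contour_integral (linepath 0 z) (\<lambda>t. poly p t * exp (poly q t)) + c"
    and "R > 0"
    and "\<And>z. poly (pderiv q) z = 0 \<Longrightarrow> poly q z \<in> ball 0 R"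
    and "\<And>z. norm z \<ge> (1/2) * R powr (1 / real d) \<Longrightarrow>
           (1/2) ^ d * norm z ^ d \<le> norm (poly q z) \<and> norm (poly q z) \<le> 2 ^ d * norm z ^ d"
    and "S \<in> components (poly q -` slitG R)"
    and "\<And>w. w \<in> slitG R \<Longrightarrow> poly q (\<phi> w) = w"
    and "\<phi> ` slitG R = S"
  shows "\<exists>cS :: complex. \<exists>C :: real. eventually (\<lambda>w. w \<in> slitG R \<longrightarrow>
           norm (g (\<phi> w) - cS
                 - poly p (\<phi> w) / poly (pderiv q) (\<phi> w)
                   * (1 + ((of_nat d - 1 - of_nat m) / of_nat d) / w) * exp w)
           \<le> C * norm (poly p (\<phi> w) / poly (pderiv q) (\<phi> w) * exp w)
               * norm w powr (- 1 - 1 / real d)) at_infinity"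
proof -
  interpret poly_exp_branch p q m d R S \<phi>
    by unfold_locales (fact assms)+
  obtain cS C where "eventually (\<lambda>w. w \<in> slitG R \<longrightarrow> norm (g (\<phi> w) - cS - main_term p q lam (\<phi> w))
      \<le> C * norm (poly p (\<phi> w) / poly (pderiv q) (\<phi> w) * exp w) * norm w powr (- 1 - 1 / real d))
      at_infinity"
    using remainder_asymptotics[OF assms(6)] by blast
  then show ?thesis
    by (intro exI[of _ cS] exI[of _ C]) (erule eventually_mono; auto simp: main_term_\<phi>)
qed

end
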